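(* For all integers $a,b\ge 0$, $\ell_{\rm leaf}(a,0)\,\ell_{\rm leaf}(0,b)\ge\ell_{\rm leaf}(a,b)$.
   Context: Fix $\rho^1,\rho^0>0$ and let $B$ denote the Beta function. Define $\ell_{\rm leaf}(c^1,c^0)=\dfrac{B(c^1+\rho^1,\,c^0+\rho^0)}{B(\rho^1,\rho^0)}$ for integers $c^1,c^0\ge0$. *)

theory Defs
  imports "HOL-Analysis.Analysis"
begin

definition l_leaf :: "real \<Rightarrow> real \<Rightarrow> nat \<Rightarrow> nat \<Rightarrow> real" where
  "l_leaf \<rho>1 \<rho>0 c1 c0 = Beta (real c1 + \<rho>1) (real c0 + \<rho>0) / Beta \<rho>1 \<rho>0"

end

theory Submission
  imports Defs
begin

text \<open>With \<open>s = \<rho>1 + \<rho>0\<close> and \<open>(x)_n\<close> the rising factorial, the functional equation of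
  \<open>\<Gamma>\<close> gives \<open>l_leaf \<rho>1 \<rho>0 a b = (\<rho>1)_a (\<rho>0)_b / (s)_(a+b)\<close>. The claim thus reduces to
  \<open>(s)_a (s)_b \<le> (s)_a (s + a)_b = (s)_(a+b)\<close>, i.e. to the monotonicity of the rising
  factorial in its base.\<close>

lemma pochhammer_mono:
  fixes x y :: "'a :: linordered_semidom"
  assumes "0 \<le> x" "x \<le> y"
  shows "pochhammer x n \<le> pochhammer y n"
  unfolding pochhammer_prod using assms by (intro prod_mono) auto

lemma pochhammer_mult_le_pochhammer_add:
  fixes x :: "'a :: linordered_semidom"
  assumes "0 \<le> x"
  shows "pochhammer x m * pochhammer x n \<le> pochhammer x (m + n)"
proof -
  have "pochhammer x m * pochhammer x n \<le> pochhammer x m * pochhammer (x + of_nat m) n"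
    using assms by (intro mult_left_mono pochhammer_mono) (auto simp: pochhammer_prod intro: prod_nonneg)
  also have "\<dots> = pochhammer x (m + n)"
    by (simp add: pochhammer_product')
  finally show ?thesis .
qed

lemma Gamma_add_of_nat:
  assumes "z \<notin> \<int>\<^sub>\<le>\<^sub>0"
  shows "Gamma (z + of_nat n) = pochhammer z n * Gamma z"
  using pochhammer_Gamma[OF assms, of n] assms by (simp add: Gamma_eq_zero_iff)

lemma Beta_add_of_nat:
  assumes "x \<notin> \<int>\<^sub>\<le>\<^sub>0" "y \<notin> \<int>\<^sub>\<le>\<^sub>0" "x + y \<notin> \<int>\<^sub>\<le>\<^sub>0"
  shows "Beta (x + of_nat m) (y + of_nat n)
           = pochhammer x m * pochhammer y n / pochhammer (x + y) (m + n) * Beta x y"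
proof -
  have "Gamma (x + of_nat m + (y + of_nat n)) = pochhammer (x + y) (m + n) * Gamma (x + y)"
    using Gamma_add_of_nat[OF assms(3), of "m + n"] by (simp add: ac_simps)
  moreover have "pochhammer (x + y) (m + n) \<noteq> 0"
    using assms(3) pochhammer_eq_0_imp_nonpos_Int by blast
  ultimately show ?thesis
    using assms by (simp add: Beta_def Gamma_add_of_nat Gamma_eq_zero_iff field_simps)
qed

lemma l_leaf_eq_pochhammer:
  assumes "\<rho>1 > 0" "\<rho>0 > 0"
  shows "l_leaf \<rho>1 \<rho>0 c1 c0
           = pochhammer \<rho>1 c1 * pochhammer \<rho>0 c0 / pochhammer (\<rho>1 + \<rho>0) (c1 + c0)"
proof -
  have "\<rho>1 \<notin> \<int>\<^sub>\<le>\<^sub>0" "\<rho>0 \<notin> \<int>\<^sub>\<le>\<^sub>0" "\<rho>1 + \<rho>0 \<notin> \<int>\<^sub>\<le>\<^sub>0"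
    using assms by auto
  moreover have "Beta \<rho>1 \<rho>0 > 0"
    using assms by (simp add: Beta_def)
  ultimately show ?thesis
    by (simp add: l_leaf_def Beta_add_of_nat add.commute)
qed

theorem lemma13:
  fixes \<rho>1 \<rho>0 :: real and a b :: nat
  assumes "\<rho>1 > 0" and "\<rho>0 > 0"
  shows "l_leaf \<rho>1 \<rho>0 a 0 * l_leaf \<rho>1 \<rho>0 0 b \<ge> l_leaf \<rho>1 \<rho>0 a b"
proof -
  define s where "s = \<rho>1 + \<rho>0"
  have "s > 0"
    using assms by (simp add: s_def)
  have "pochhammer \<rho>1 a * pochhammer \<rho>0 b / pochhammer s (a + b)
          \<le> pochhammer \<rho>1 a * pochhammer \<rho>0 b / (pochhammer s a * pochhammer s b)"
    using \<open>s > 0\<close> assms pochhammer_mult_le_pochhammer_add[of s a b]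
    by (intro divide_left_mono mult_nonneg_nonneg mult_pos_pos pochhammer_pos pochhammer_nonneg) auto
  then show ?thesis
    using assms by (simp add: l_leaf_eq_pochhammer s_def)
qed

end
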